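(* Let $q$ be a nonzero real number with $|q|\neq1$, let $a_0,\dots,a_k\in\mathbb{C}[z]$ be polynomials, and let $T_1(p)(z)=a_0(z)p(z)+a_1(z)p(qz)+\dots+a_k(z)p(q^kz)$. Then $T_1(\mathcal{LP}(\mathbb{R};2))\subset\mathcal{LP}(\mathbb{R};2)$ if and only if $a_i\not\equiv0$ for at most one index $i$ and this $a_i$ belongs to $\mathcal{HP}$.
   Context: $\mathcal{HP}$ is the set of (nonzero) polynomials with real coefficients all of whose zeros are real. $\mathcal{LP}(\mathbb{R})$ is the set of entire $f(z)=h(z)e^{-\alpha z^2+\beta z}$ with $h(z)=cz^n\prod_k(1-z/z_k)e^{tz/z_k}$, $\beta\in\mathbb{R}$, $c\in\mathbb{R}\setminus\{0\}$, $\alpha\ge0$, $t\in\{0,1\}$, $n\in\mathbb{Z}_{\ge0}$, $\{z_k\}$ a finite or infinite sequence of real numbers with $\sum_k|z_k|^{-t-1}<\infty$. $\mathcal{LP}(\mathbb{R};2)$ is the subset of $\mathcal{LP}(\mathbb{R})$ of those $f$ whose representation has $\alpha>0$. *)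

theory Defs
  imports "HOL-Analysis.Analysis" "HOL-Computational_Algebra.Polynomial"
begin

definition wfac :: "nat \<Rightarrow> real \<Rightarrow> complex \<Rightarrow> complex" where
  "wfac t w z = (1 - z / complex_of_real w) * exp (of_nat t * z / complex_of_real w)"

text \<open>h is the (canonical) product over the zero sequence zs, which is finite
  (fin = Some N: zeros zs 0, ..., zs (N-1)) or infinite (fin = None), with
  the zeros nonzero and, in the infinite case, sum |z_k|^(-t-1) finite;
  the infinite product is the pointwise limit of the partial products.\<close>
definition canonical_prod :: "nat \<Rightarrow> (nat \<Rightarrow> real) \<Rightarrow> nat option \<Rightarrow> (complex \<Rightarrow> complex) \<Rightarrow> bool" where
  "canonical_prod t zs fin P =
     (case fin of
        Some N \<Rightarrow> (\<forall>k<N. zs k \<noteq> 0) \<and> (\<forall>z. P z = (\<Prod>k<N. wfac t (zs k) z))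
      | None \<Rightarrow> (\<forall>k. zs k \<noteq> 0) \<and> summable (\<lambda>k. \<bar>zs k\<bar> powr (- (real t + 1))) \<and>
                (\<forall>z. (\<lambda>m. \<Prod>k<m. wfac t (zs k) z) \<longlonglongrightarrow> P z))"

definition LP_repr :: "(complex \<Rightarrow> complex) \<Rightarrow> real \<Rightarrow> bool" where
  "LP_repr f \<alpha> = (\<exists>c n t \<beta> zs fin P.
      c \<noteq> 0 \<and> \<alpha> \<ge> 0 \<and> t \<le> 1 \<and> canonical_prod t zs fin P \<and>
      (\<forall>z. f z = complex_of_real c * z ^ n * P z *
                 exp (- complex_of_real \<alpha> * z ^ 2 + complex_of_real \<beta> * z)))"

definition LP :: "(complex \<Rightarrow> complex) set" where
  "LP = {f. \<exists>\<alpha>. LP_repr f \<alpha>}"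

definition LP2 :: "(complex \<Rightarrow> complex) set" where
  "LP2 = {f. \<exists>\<alpha>>0. LP_repr f \<alpha>}"

definition HP :: "complex poly set" where
  "HP = {p. p \<noteq> 0 \<and> (\<forall>i. coeff p i \<in> \<real>) \<and> (\<forall>z. poly p z = 0 \<longrightarrow> z \<in> \<real>)}"

definition T1 :: "real \<Rightarrow> nat \<Rightarrow> (nat \<Rightarrow> complex poly) \<Rightarrow> (complex \<Rightarrow> complex) \<Rightarrow> complex \<Rightarrow> complex" where
  "T1 q k a f = (\<lambda>z. \<Sum>i\<le>k. poly (a i) z * f (complex_of_real (q ^ i) * z))"

end

theory Submission
  imports Defs "HOL-Complex_Analysis.Complex_Analysis"
    "HOL-Computational_Algebra.Fundamental_Theorem_Algebra" "HOL-Real_Asymp.Real_Asymp"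
begin

text \<open>
  Sufficiency: \<open>T\<^sub>1 p (z) = a\<^sub>j(z) p(q\<^sup>j z)\<close>; rescaling the variable multiplies \<open>\<alpha>\<close> by \<open>q\<^bsup>2j\<^esup>\<close>, and a
  polynomial in \<open>HP\<close> only contributes real linear factors, each of which is a new Weierstrass
  factor up to a shift of \<open>\<beta>\<close>.

  Necessity: apply \<open>T\<^sub>1\<close> to \<open>e\<^bsup>-z\<^sup>2\<^esup>\<close>, giving \<open>g(z) = \<Sum> a\<^sub>i(z) e\<^bsup>-q\<^bsup>2i\<^esup> z\<^sup>2\<^esup>\<close>. A canonical product of genus
  at most one grows like \<open>exp (o(|z|\<^sup>2))\<close> on the two axes, so a representation
  \<open>g = c z\<^sup>n P(z) e\<^bsup>-\<alpha> z\<^sup>2 + \<beta> z\<^esup>\<close> gives \<open>|g(iy)| \<le> e\<^bsup>(\<alpha> + o(1)) y\<^sup>2\<^esup>\<close> and \<open>|g(x)| \<le> e\<^bsup>(-\<alpha> + o(1)) x\<^sup>2\<^esup>\<close>.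
  As \<open>|q| \<noteq> 1\<close>, the exponents \<open>q\<^bsup>2i\<^esup>\<close> are distinct, so the largest one dominates \<open>g\<close> on the
  imaginary axis and the smallest one on the real axis. Hence largest \<open>\<le> \<alpha> \<le>\<close> smallest, and only
  one \<open>a\<^sub>j\<close> is nonzero. Finally \<open>a\<^sub>j(z) e\<^bsup>-q\<^bsup>2j\<^esup> z\<^sup>2\<^esup>\<close> is real on \<open>\<real>\<close> and vanishes only on \<open>\<real>\<close>,
  i.e. \<open>a\<^sub>j \<in> HP\<close>.
\<close>

lemma wfac_rescale:
  assumes "q \<noteq> 0" "w \<noteq> 0"
  shows "wfac t (w / q) z = wfac t w (complex_of_real q * z)"
  using assms by (simp add: wfac_def field_simps)

lemma canonical_prod_rescale:
  assumes "canonical_prod t zs fin P" "q \<noteq> 0"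
  shows "canonical_prod t (\<lambda>k. zs k / q) fin (\<lambda>z. P (complex_of_real q * z))"
proof (cases fin)
  case None
  with assms have nz: "\<forall>k. zs k \<noteq> 0" and sm: "summable (\<lambda>k. \<bar>zs k\<bar> powr (- (real t + 1)))"
    and lim: "\<forall>z. (\<lambda>m. \<Prod>k<m. wfac t (zs k) z) \<longlonglongrightarrow> P z"
    by (auto simp: canonical_prod_def)
  have "summable (\<lambda>k. \<bar>zs k / q\<bar> powr (- (real t + 1)))"
    using sm by (simp add: abs_divide powr_divide assms powr_minus divide_simps)
  moreover have "(\<lambda>m. \<Prod>k<m. wfac t (zs k / q) z) \<longlonglongrightarrow> P (complex_of_real q * z)" for z
    using lim[rule_format, of "complex_of_real q * z"] by (simp add: wfac_rescale nz assms)
  ultimately show ?thesis using None nz assms by (auto simp: canonical_prod_def)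
next
  case (Some N)
  with assms show ?thesis by (auto simp: canonical_prod_def wfac_rescale)
qed

lemma LP_repr_rescale:
  assumes "LP_repr f \<alpha>" "q \<noteq> 0"
  shows "LP_repr (\<lambda>z. f (complex_of_real q * z)) (\<alpha> * q\<^sup>2)"
proof -
  obtain c n t \<beta> zs fin P where rep: "c \<noteq> 0" "\<alpha> \<ge> 0" "t \<le> 1" "canonical_prod t zs fin P"
    "\<forall>z. f z = complex_of_real c * z ^ n * P z * exp (- complex_of_real \<alpha> * z ^ 2 + complex_of_real \<beta> * z)"
    using assms(1) unfolding LP_repr_def by blast
  show ?thesis unfolding LP_repr_def
  proof (intro exI conjI allI)
    show "c * q ^ n \<noteq> 0" "\<alpha> * q\<^sup>2 \<ge> 0" "t \<le> 1" using rep assms by auto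
    show "canonical_prod t (\<lambda>k. zs k / q) fin (\<lambda>z. P (complex_of_real q * z))"
      by (rule canonical_prod_rescale[OF rep(4) assms(2)])
    show "f (complex_of_real q * z) = complex_of_real (c * q ^ n) * z ^ n * P (complex_of_real q * z) *
      exp (- complex_of_real (\<alpha> * q\<^sup>2) * z\<^sup>2 + complex_of_real (\<beta> * q) * z)" for z
      by (simp add: rep(5) power_mult_distrib algebra_simps)
  qed
qed

lemma canonical_prod_cons:
  assumes "canonical_prod t zs fin P" "r \<noteq> 0"
  shows "canonical_prod t (\<lambda>k. if k = 0 then r else zs (k - 1)) (map_option Suc fin)
           (\<lambda>z. wfac t r z * P z)"
proof (cases fin)
  case None
  with assms have nz: "\<forall>k. zs k \<noteq> 0" and sm: "summable (\<lambda>k. \<bar>zs k\<bar> powr (- (real t + 1)))"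
    and lim: "\<forall>z. (\<lambda>m. \<Prod>k<m. wfac t (zs k) z) \<longlonglongrightarrow> P z"
    by (auto simp: canonical_prod_def)
  let ?zs = "\<lambda>k. if k = 0 then r else zs (k - 1)"
  have "summable (\<lambda>k. \<bar>?zs (Suc k)\<bar> powr (- (real t + 1)))" using sm by simp
  hence "summable (\<lambda>k. \<bar>?zs k\<bar> powr (- (real t + 1)))" by (subst (asm) summable_Suc_iff)
  moreover have "(\<lambda>m. \<Prod>k<m. wfac t (?zs k) z) \<longlonglongrightarrow> wfac t r z * P z" for z
  proof -
    have "(\<lambda>m. \<Prod>k<Suc m. wfac t (?zs k) z) \<longlonglongrightarrow> wfac t r z * P z"
      using tendsto_mult_left[OF lim[rule_format, of z], of "wfac t r z"]
      by (simp add: prod.lessThan_Suc_shift del: prod.lessThan_Suc)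
    thus ?thesis by (subst (asm) filterlim_sequentially_Suc)
  qed
  ultimately show ?thesis using None nz assms by (auto simp: canonical_prod_def)
next
  case (Some N)
  with assms show ?thesis
    by (auto simp: canonical_prod_def prod.lessThan_Suc_shift less_Suc_eq_0_disj simp del: prod.lessThan_Suc)
qed

lemma LP_repr_mult_real_linear:
  assumes "LP_repr f \<alpha>"
  shows "LP_repr (\<lambda>z. (z - complex_of_real r) * f z) \<alpha>"
proof -
  obtain c n t \<beta> zs fin P where rep: "c \<noteq> 0" "\<alpha> \<ge> 0" "t \<le> 1" "canonical_prod t zs fin P"
    "\<forall>z. f z = complex_of_real c * z ^ n * P z * exp (- complex_of_real \<alpha> * z ^ 2 + complex_of_real \<beta> * z)"
    using assms unfolding LP_repr_def by blast
  show ?thesis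
  proof (cases "r = 0")
    case True
    show ?thesis unfolding LP_repr_def
      by (intro exI[of _ c] exI[of _ "Suc n"] exI[of _ t] exI[of _ \<beta>] exI[of _ zs] exI[of _ fin] exI[of _ P])
         (use rep True in auto)
  next
    case False
    \<comment> \<open>the exponential part of the new factor is absorbed by shifting \<open>\<beta>\<close> by \<open>t/r\<close>\<close>
    have lin: "z - complex_of_real r =
        complex_of_real (- r) * wfac t r z * exp (- (complex_of_real (real t / r) * z))" for z
      using False by (simp add: wfac_def exp_minus field_simps)
    show ?thesis unfolding LP_repr_def
    proof (intro exI conjI allI)
      show "- r * c \<noteq> 0" "\<alpha> \<ge> 0" "t \<le> 1" using rep False by auto
      show "canonical_prod t (\<lambda>k. if k = 0 then r else zs (k - 1)) (map_option Suc fin) (\<lambda>z. wfac t r z * P z)"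
        by (rule canonical_prod_cons[OF rep(4) False])
      show "(z - complex_of_real r) * f z = complex_of_real (- r * c) * z ^ n * (wfac t r z * P z) *
          exp (- complex_of_real \<alpha> * z\<^sup>2 + complex_of_real (\<beta> - real t / r) * z)" for z
        unfolding lin rep(5)[rule_format]
        by (simp add: exp_add[symmetric] mult_exp_exp algebra_simps diff_divide_distrib)
    qed
  qed
qed

lemma LP_repr_mult_real_const:
  assumes "LP_repr f \<alpha>" "d \<noteq> 0"
  shows "LP_repr (\<lambda>z. complex_of_real d * f z) \<alpha>"
proof -
  obtain c n t \<beta> zs fin P where rep: "c \<noteq> 0" "\<alpha> \<ge> 0" "t \<le> 1" "canonical_prod t zs fin P"
    "\<forall>z. f z = complex_of_real c * z ^ n * P z * exp (- complex_of_real \<alpha> * z ^ 2 + complex_of_real \<beta> * z)"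
    using assms(1) unfolding LP_repr_def by blast
  show ?thesis unfolding LP_repr_def
    by (intro exI[of _ "d * c"] exI[of _ n] exI[of _ t] exI[of _ \<beta>] exI[of _ zs] exI[of _ fin] exI[of _ P])
       (use rep assms(2) in \<open>auto simp: algebra_simps\<close>)
qed

lemma LP_repr_mult_real_roots:
  fixes d :: nat and rt :: "nat \<Rightarrow> complex"
  assumes "LP_repr f \<alpha>" "\<forall>i<d. rt i \<in> \<real>"
  shows "LP_repr (\<lambda>z. (\<Prod>i<d. z - rt i) * f z) \<alpha>"
  using assms(2)
proof (induction d)
  case 0
  thus ?case using assms(1) by simp
next
  case (Suc d)
  then obtain r where r: "rt d = complex_of_real r" by (auto elim!: Reals_cases)
  have "LP_repr (\<lambda>z. (z - complex_of_real r) * ((\<Prod>i<d. z - rt i) * f z)) \<alpha>"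
    by (rule LP_repr_mult_real_linear) (use Suc in auto)
  thus ?case by (simp add: r algebra_simps)
qed

lemma LP_repr_mult_HP:
  assumes "LP_repr f \<alpha>" "p \<in> HP"
  shows "LP_repr (\<lambda>z. poly p z * f z) \<alpha>"
proof -
  obtain rt where rt: "smult (lead_coeff p) (\<Prod>i<degree p. [:-rt i, 1:]) = p"
    using complex_poly_decompose' by blast
  have p_eq: "poly p z = lead_coeff p * (\<Prod>i<degree p. z - rt i)" for z
    by (subst rt[symmetric]) (simp add: poly_prod)
  have "rt i \<in> \<real>" if "i < degree p" for i
  proof -
    have "poly p (rt i) = 0" unfolding p_eq using that by (auto intro: prod_zero)
    thus ?thesis using assms(2) by (auto simp: HP_def)
  qed
  hence "LP_repr (\<lambda>z. (\<Prod>i<degree p. z - rt i) * f z) \<alpha>"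
    by (intro LP_repr_mult_real_roots assms(1)) auto
  moreover have "lead_coeff p \<in> \<real>" "lead_coeff p \<noteq> 0" using assms(2) by (auto simp: HP_def)
  then obtain l where "lead_coeff p = complex_of_real l" "l \<noteq> 0"
    by (metis Reals_cases of_real_0)
  ultimately show ?thesis
    using LP_repr_mult_real_const by (simp add: p_eq mult.assoc)
qed

lemma T1_single_coeff:
  assumes "j \<le> k" "\<forall>i\<le>k. i \<noteq> j \<longrightarrow> a i = 0"
  shows "T1 q k a f = (\<lambda>z. poly (a j) z * f (complex_of_real (q ^ j) * z))"
proof
  fix z
  have "T1 q k a f z = (\<Sum>i\<le>k. if i = j then poly (a j) z * f (complex_of_real (q ^ j) * z) else 0)"
    unfolding T1_def by (rule sum.cong) (use assms(2) in auto)
  thus "T1 q k a f z = poly (a j) z * f (complex_of_real (q ^ j) * z)" using assms(1) by simp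
qed

lemma T1_single_HP_coeff_preserves_LP2:
  assumes "q \<noteq> 0" "j \<le> k" "\<forall>i\<le>k. i \<noteq> j \<longrightarrow> a i = 0" "a j \<in> HP" "f \<in> LP2"
  shows "T1 q k a f \<in> LP2"
proof -
  obtain \<alpha> where "\<alpha> > 0" "LP_repr f \<alpha>" using assms(5) by (auto simp: LP2_def)
  hence "LP_repr (\<lambda>z. poly (a j) z * f (complex_of_real (q ^ j) * z)) (\<alpha> * (q ^ j)\<^sup>2)"
    and "\<alpha> * (q ^ j)\<^sup>2 > 0"
    using assms LP_repr_rescale[of f \<alpha> "q ^ j"] by (auto intro!: LP_repr_mult_HP)
  thus ?thesis unfolding T1_single_coeff[OF assms(2,3)] LP2_def by blast
qed

lemma abs_one_minus_mult_exp_le: "\<bar>1 - u\<bar> * exp u \<le> exp ((u::real)\<^sup>2)"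
proof (cases "u \<le> 1")
  case True
  have "1 - u \<le> exp (- u)" using exp_ge_add_one_self[of "-u"] by simp
  hence "\<bar>1 - u\<bar> * exp u \<le> exp (-u) * exp u" using True by (intro mult_right_mono) auto
  also have "\<dots> = 1" by (simp add: exp_minus)
  finally show ?thesis by (meson one_le_exp_iff order_trans zero_le_power2)
next
  case False
  have "u - 1 \<le> exp (u - 2)" using exp_ge_add_one_self[of "u - 2"] by simp
  hence "\<bar>1 - u\<bar> * exp u \<le> exp (u - 2) * exp u" using False by (intro mult_right_mono) auto
  also have "\<dots> = exp (2 * u - 2)" by (simp add: exp_add[symmetric])
  also have "\<dots> \<le> exp (u\<^sup>2)" using zero_le_power2[of "u - 1"] by (simp add: power2_diff)
  finally show ?thesis .
qed

lemma wfac_of_real: "wfac t r (complex_of_real x) = complex_of_real ((1 - x / r) * exp (real t * (x / r)))"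
  by (simp add: wfac_def exp_of_real[symmetric])

lemma norm_wfac_imaginary: "norm (wfac t r (\<i> * complex_of_real x)) = sqrt (1 + (x / r)\<^sup>2)"
proof -
  have "norm (1 - \<i> * complex_of_real x / complex_of_real r) = sqrt (1 + (x / r)\<^sup>2)"
  proof -
    have "1 - \<i> * complex_of_real x / complex_of_real r = Complex 1 (- (x / r))"
      by (simp add: complex_eq_iff)
    thus ?thesis by (simp add: cmod_def)
  qed
  moreover have "norm (exp (of_nat t * (\<i> * complex_of_real x) / complex_of_real r)) = 1"
    by (simp add: norm_exp_eq_Re)
  ultimately show ?thesis unfolding wfac_def norm_mult by simp
qed

lemma norm_wfac_le_linear:
  assumes "t \<le> 1"
  shows "norm (wfac t r w) \<le> exp (2 * norm w / \<bar>r\<bar>)"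
proof -
  define u where "u = w / complex_of_real r"
  have nu: "norm u = norm w / \<bar>r\<bar>" by (simp add: u_def norm_divide)
  have "norm (1 - u) \<le> 1 + norm u" using norm_triangle_ineq4[of 1 u] by simp
  also have "\<dots> \<le> exp (norm u)" by (metis add.commute exp_ge_add_one_self)
  finally have "norm (1 - u) \<le> exp (norm u)" .
  moreover have "norm (exp (of_nat t * u)) \<le> exp (norm u)"
    using norm_exp[of "of_nat t * u"] assms by (cases t) (auto simp: norm_mult)
  ultimately have "norm ((1 - u) * exp (of_nat t * u)) \<le> exp (norm u) * exp (norm u)"
    unfolding norm_mult by (intro mult_mono) auto
  also have "\<dots> = exp (2 * norm w / \<bar>r\<bar>)" by (simp add: nu exp_add[symmetric])
  finally show ?thesis by (simp add: wfac_def u_def)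
qed

lemma abs_one_minus_mult_exp_le_exp_power:
  assumes "t \<le> 1"
  shows "\<bar>1 - v\<bar> * exp (real t * v) \<le> exp (\<bar>v\<bar> ^ Suc t)"
proof (cases "t = 0")
  case True
  have "\<bar>1 - v\<bar> \<le> 1 + \<bar>v\<bar>" by linarith
  also have "\<dots> \<le> exp \<bar>v\<bar>" by (metis add.commute exp_ge_add_one_self)
  finally show ?thesis using True by simp
next
  case False
  with assms have "t = 1" by simp
  thus ?thesis using abs_one_minus_mult_exp_le[of v] by (simp add: power2_eq_square)
qed

lemma sqrt_one_plus_square_le_exp_power:
  assumes "t \<le> 1"
  shows "sqrt (1 + v\<^sup>2) \<le> exp (\<bar>v\<bar> ^ Suc t)"
proof (cases "t = 0")
  case True
  have "sqrt (1 + v\<^sup>2) \<le> 1 + \<bar>v\<bar>"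
    by (rule real_le_lsqrt) (simp_all add: power2_eq_square algebra_simps)
  also have "\<dots> \<le> exp \<bar>v\<bar>" by (metis add.commute exp_ge_add_one_self)
  finally show ?thesis using True by simp
next
  case False
  with assms have "t = 1" by simp
  have "1 + v\<^sup>2 \<le> exp (v\<^sup>2)" using exp_ge_add_one_self[of "v\<^sup>2"] by simp
  also have "\<dots> \<le> (exp (v\<^sup>2))\<^sup>2" by (simp add: power2_eq_square)
  finally have "sqrt (1 + v\<^sup>2) \<le> exp (v\<^sup>2)" by (intro real_le_lsqrt) simp_all
  thus ?thesis using \<open>t = 1\<close> by (simp add: power2_eq_square)
qed

text \<open>Only the two axes are needed below, and there the factor is explicit:
  \<open>(1 - v) e\<^bsup>t v\<^esup>\<close> on the real axis and of modulus \<open>\<surd>(1 + v\<^sup>2)\<close> on the imaginary one.\<close>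
lemma norm_wfac_le_on_axes:
  assumes "t \<le> 1" "Re w = 0 \<or> Im w = 0"
  shows "norm (wfac t r w) \<le> exp ((norm w / \<bar>r\<bar>) ^ Suc t)"
  using assms(2)
proof
  assume "Re w = 0"
  then obtain x where w: "w = \<i> * complex_of_real x" by (metis complex_eq mult.commute add_0 of_real_0)
  show ?thesis using sqrt_one_plus_square_le_exp_power[OF assms(1), of "x / r"]
    by (simp add: w norm_wfac_imaginary norm_mult abs_divide)
next
  assume "Im w = 0"
  then obtain x where w: "w = complex_of_real x" by (metis complex_is_Real_iff Reals_cases)
  show ?thesis using abs_one_minus_mult_exp_le_exp_power[OF assms(1), of "x / r"]
    unfolding w wfac_of_real norm_of_real abs_mult by (simp add: abs_divide)
qed

lemma norm_prod_wfac_le: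
  assumes "t \<le> 1" "Re w = 0 \<or> Im w = 0" "finite A"
  shows "norm (\<Prod>k\<in>A. wfac t (zs k) w) \<le>
           exp ((2 * (\<Sum>k\<in>A \<inter> {..<N}. 1 / \<bar>zs k\<bar>)) * norm w +
                (\<Sum>k\<in>A - {..<N}. 1 / \<bar>zs k\<bar> ^ Suc t) * norm w ^ Suc t)"
proof -
  define b where "b k = (if k < N then 2 * (1 / \<bar>zs k\<bar>) * norm w else 1 / \<bar>zs k\<bar> ^ Suc t * norm w ^ Suc t)" for k
  have "norm (\<Prod>k\<in>A. wfac t (zs k) w) = (\<Prod>k\<in>A. norm (wfac t (zs k) w))" by (simp add: prod_norm)
  also have "\<dots> \<le> (\<Prod>k\<in>A. exp (b k))"
    using norm_wfac_le_linear[OF assms(1)] norm_wfac_le_on_axes[OF assms(1,2)]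
    by (intro prod_mono) (auto simp: b_def power_divide)
  also have "\<dots> = exp (\<Sum>k\<in>A. b k)" by (simp add: exp_sum assms(3))
  also have "(\<Sum>k\<in>A. b k) = (\<Sum>k\<in>A \<inter> {..<N}. b k) + (\<Sum>k\<in>A - {..<N}. b k)"
    by (rule sum.Int_Diff[OF assms(3)])
  finally show ?thesis by (simp add: b_def sum_distrib_left sum_distrib_right)
qed

lemma powr_neg_Suc:
  assumes "r \<noteq> 0"
  shows "\<bar>r\<bar> powr (- (real t + 1)) = 1 / \<bar>r\<bar> ^ Suc t"
proof -
  have "\<bar>r\<bar> powr (real t + 1) = \<bar>r\<bar> ^ Suc t"
    using powr_realpow[of "\<bar>r\<bar>" "Suc t"] assms by (simp add: add.commute)
  thus ?thesis by (subst powr_minus) (simp add: inverse_eq_divide del: power_Suc)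
qed

text \<open>A canonical product of genus at most one grows at most like \<open>exp (\<epsilon> |w|\<^sup>2)\<close> on the axes,
  for every \<open>\<epsilon> > 0\<close>: the finitely many small zeros contribute a linear exponent, the tail of
  \<open>\<Sum> 1/|z\<^sub>k|\<^bsup>t+1\<^esup>\<close> a small multiple of \<open>|w|\<^bsup>t+1\<^esup>\<close>.\<close>
lemma canonical_prod_growth_on_axes:
  assumes "canonical_prod t zs fin P" "t \<le> 1" "\<epsilon> > 0"
  obtains C where "\<And>w. Re w = 0 \<or> Im w = 0 \<Longrightarrow> norm (P w) \<le> exp (C * norm w + \<epsilon> * (norm w)\<^sup>2)"
proof (cases fin)
  case (Some N)
  with assms(1) have P: "P w = (\<Prod>k<N. wfac t (zs k) w)" for w by (simp add: canonical_prod_def)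
  let ?C = "2 * (\<Sum>k<N. 1 / \<bar>zs k\<bar>)"
  have "norm (P w) \<le> exp (?C * norm w + \<epsilon> * (norm w)\<^sup>2)" if "Re w = 0 \<or> Im w = 0" for w
  proof -
    have "norm (P w) \<le> exp (?C * norm w)"
      using norm_prod_wfac_le[OF assms(2) that, of "{..<N}" zs N] unfolding P by simp
    also have "\<dots> \<le> exp (?C * norm w + \<epsilon> * (norm w)\<^sup>2)" using assms(3) by simp
    finally show ?thesis .
  qed
  thus ?thesis by (rule that)
next
  case None
  with assms(1) have nz: "\<forall>k. zs k \<noteq> 0" and sm: "summable (\<lambda>k. \<bar>zs k\<bar> powr (- (real t + 1)))"
    and lim: "\<forall>w. (\<lambda>m. \<Prod>k<m. wfac t (zs k) w) \<longlonglongrightarrow> P w"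
    by (auto simp: canonical_prod_def)
  have "summable (\<lambda>k. 1 / \<bar>zs k\<bar> ^ Suc t)"
    using sm by (simp only: powr_neg_Suc[OF nz[rule_format]])
  then obtain N where N: "\<forall>m\<ge>N. \<forall>n. norm (\<Sum>k\<in>{m..<n}. 1 / \<bar>zs k\<bar> ^ Suc t) < \<epsilon>"
    using assms(3) unfolding summable_Cauchy by blast
  let ?H = "\<Sum>k<N. 1 / \<bar>zs k\<bar>"
  have "norm (P w) \<le> exp ((2 * ?H + \<epsilon>) * norm w + \<epsilon> * (norm w)\<^sup>2)" if w: "Re w = 0 \<or> Im w = 0" for w
  proof (rule LIMSEQ_le_const2[OF tendsto_norm[OF lim[rule_format, of w]]], intro exI allI impI)
    fix m
    have head: "(\<Sum>k\<in>{..<m} \<inter> {..<N}. 1 / \<bar>zs k\<bar>) \<le> ?H" by (intro sum_mono2) auto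
    have "{..<m} - {..<N} = {N..<m}" by auto
    hence tail: "(\<Sum>k\<in>{..<m} - {..<N}. 1 / \<bar>zs k\<bar> ^ Suc t) \<le> \<epsilon>"
      using N[rule_format, of N m] by simp
    have "norm w ^ Suc t \<le> norm w + (norm w)\<^sup>2"
      using assms(2) by (cases t) (auto simp: power2_eq_square)
    with tail have "(\<Sum>k\<in>{..<m} - {..<N}. 1 / \<bar>zs k\<bar> ^ Suc t) * norm w ^ Suc t
        \<le> \<epsilon> * norm w + \<epsilon> * (norm w)\<^sup>2"
      using assms(3) by (metis distrib_left mult_mono norm_ge_zero zero_le_power order.strict_implies_order)
    moreover have "(2 * (\<Sum>k\<in>{..<m} \<inter> {..<N}. 1 / \<bar>zs k\<bar>)) * norm w \<le> (2 * ?H) * norm w"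
      using head by (intro mult_right_mono) auto
    ultimately have bound: "(2 * (\<Sum>k\<in>{..<m} \<inter> {..<N}. 1 / \<bar>zs k\<bar>)) * norm w +
        (\<Sum>k\<in>{..<m} - {..<N}. 1 / \<bar>zs k\<bar> ^ Suc t) * norm w ^ Suc t
        \<le> (2 * ?H + \<epsilon>) * norm w + \<epsilon> * (norm w)\<^sup>2"
      by (simp only: distrib_right)
    have "norm (\<Prod>k<m. wfac t (zs k) w) \<le> exp ((2 * (\<Sum>k\<in>{..<m} \<inter> {..<N}. 1 / \<bar>zs k\<bar>)) * norm w +
        (\<Sum>k\<in>{..<m} - {..<N}. 1 / \<bar>zs k\<bar> ^ Suc t) * norm w ^ Suc t)"
      by (rule norm_prod_wfac_le[OF assms(2) w finite_lessThan])
    also have "\<dots> \<le> exp ((2 * ?H + \<epsilon>) * norm w + \<epsilon> * (norm w)\<^sup>2)"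
      using bound by simp
    finally show "norm (\<Prod>k<m. wfac t (zs k) w) \<le> exp ((2 * ?H + \<epsilon>) * norm w + \<epsilon> * (norm w)\<^sup>2)" .
  qed
  thus ?thesis by (rule that)
qed

lemma wfac_eq_weierstrass_factor: "t \<le> 1 \<Longrightarrow> wfac t w z = weierstrass_factor t (z / complex_of_real w)"
  by (cases t) (auto simp: wfac_def weierstrass_factor_def)

lemma wfac_nonzero: "z \<notin> \<real> \<Longrightarrow> wfac t w z \<noteq> 0"
  by (cases "w = 0") (auto simp: wfac_def field_simps)

lemma canonical_prod_nonzero:
  assumes "canonical_prod t zs fin P" "t \<le> 1" "z \<notin> \<real>"
  shows "P z \<noteq> 0"
proof (cases fin)
  case (Some N)
  with assms show ?thesis by (auto simp: canonical_prod_def wfac_nonzero)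
next
  case None
  with assms(1) have nz: "\<forall>k. zs k \<noteq> 0" and sm: "summable (\<lambda>k. \<bar>zs k\<bar> powr (- (real t + 1)))"
    and lim: "(\<lambda>m. \<Prod>k<m. wfac t (zs k) z) \<longlonglongrightarrow> P z"
    by (auto simp: canonical_prod_def)
  define g where "g k = wfac t (zs k) z" for k
  define h where "h k = norm (z / complex_of_real (zs k)) ^ Suc t" for k
  have h_eq: "h = (\<lambda>k. norm z ^ Suc t * (\<bar>zs k\<bar> powr (- (real t + 1))))"
    unfolding h_def fun_eq_iff powr_neg_Suc[OF nz[rule_format]]
    by (simp add: norm_divide power_divide del: power_Suc)
  have smh: "summable h" unfolding h_eq by (rule summable_mult[OF sm])
  have "eventually (\<lambda>k. h k < (1/2) ^ Suc t) sequentially"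
    using summable_LIMSEQ_zero[OF smh] by (rule order_tendstoD) simp
  hence "eventually (\<lambda>k. norm (norm (g k - 1)) \<le> 3 * h k) sequentially"
  proof eventually_elim
    case (elim k)
    hence "norm (z / complex_of_real (zs k)) < 1/2"
      unfolding h_def by (rule power_less_imp_less_base) simp
    thus ?case using weierstrass_factor_bound[of "z / complex_of_real (zs k)" t]
      by (simp add: g_def h_def wfac_eq_weierstrass_factor[OF assms(2)])
  qed
  hence "summable (\<lambda>k. norm (g k - 1))"
    by (rule summable_comparison_test_ev) (intro summable_mult smh)
  hence conv: "convergent_prod g"
    by (intro abs_convergent_prod_imp_convergent_prod summable_imp_abs_convergent_prod)
  have "(\<lambda>n. \<Prod>i\<le>n. g i) \<longlonglongrightarrow> P z"
    using LIMSEQ_Suc[OF lim] by (simp add: g_def lessThan_Suc_atMost)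
  hence "P z = prodinf g"
    using convergent_prod_LIMSEQ[OF conv] LIMSEQ_unique by blast
  moreover have "g k \<noteq> 0" for k unfolding g_def by (rule wfac_nonzero[OF assms(3)])
  ultimately show ?thesis using prodinf_nonzero[OF conv] by simp
qed

lemma canonical_prod_of_real_in_Reals:
  assumes "canonical_prod t zs fin P"
  shows "P (complex_of_real x) \<in> \<real>"
proof (cases fin)
  case (Some N)
  with assms show ?thesis by (auto simp: canonical_prod_def wfac_of_real intro!: prod_in_Reals)
next
  case None
  with assms have "(\<lambda>m. \<Prod>k<m. wfac t (zs k) (complex_of_real x)) \<longlonglongrightarrow> P (complex_of_real x)"
    by (auto simp: canonical_prod_def)
  hence "(\<lambda>m. Im (\<Prod>k<m. wfac t (zs k) (complex_of_real x))) \<longlonglongrightarrow> Im (P (complex_of_real x))"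
    by (rule tendsto_Im)
  moreover have "Im (\<Prod>k<m. wfac t (zs k) (complex_of_real x)) = 0" for m
    using prod_in_Reals[of "{..<m}" "\<lambda>k. wfac t (zs k) (complex_of_real x)"]
    by (simp add: complex_is_Real_iff wfac_of_real)
  ultimately have "Im (P (complex_of_real x)) = 0" by (simp add: LIMSEQ_const_iff)
  thus ?thesis by (simp add: complex_is_Real_iff)
qed

lemma LP_repr_nonzero:
  assumes "LP_repr f \<alpha>" "z \<notin> \<real>"
  shows "f z \<noteq> 0"
proof -
  obtain c n t \<beta> zs fin P where rep: "c \<noteq> 0" "t \<le> 1" "canonical_prod t zs fin P"
    "f z = complex_of_real c * z ^ n * P z * exp (- complex_of_real \<alpha> * z ^ 2 + complex_of_real \<beta> * z)"
    using assms(1) unfolding LP_repr_def by blast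
  moreover have "z \<noteq> 0" using assms(2) by auto
  ultimately show ?thesis using canonical_prod_nonzero[OF rep(3,2) assms(2)] by simp
qed

lemma LP_repr_of_real_in_Reals:
  assumes "LP_repr f \<alpha>"
  shows "f (complex_of_real x) \<in> \<real>"
proof -
  obtain c n t \<beta> zs fin P where "canonical_prod t zs fin P"
    "f (complex_of_real x) = complex_of_real c * complex_of_real x ^ n * P (complex_of_real x) *
       exp (- complex_of_real \<alpha> * complex_of_real x ^ 2 + complex_of_real \<beta> * complex_of_real x)"
    using assms unfolding LP_repr_def by blast
  moreover have "exp (- complex_of_real \<alpha> * complex_of_real x ^ 2 + complex_of_real \<beta> * complex_of_real x)
      = complex_of_real (exp (- \<alpha> * x ^ 2 + \<beta> * x))"
    by (simp flip: exp_of_real)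
  ultimately show ?thesis using canonical_prod_of_real_in_Reals by auto
qed

lemma tendsto_power_mult_exp_neg_square:
  fixes \<delta> C :: real
  assumes "\<delta> > 0"
  shows "((\<lambda>x. x ^ n * exp (C * x - \<delta> * x\<^sup>2)) \<longlongrightarrow> 0) at_top"
  using assms by real_asymp

lemma not_eventually_exp_square_le:
  fixes m K C \<mu> \<delta> :: real
  assumes "m > 0" "\<delta> > 0"
  shows "\<not> eventually (\<lambda>x. m * exp (\<mu> * x\<^sup>2) \<le> K * x ^ n * exp (C * x + (\<mu> - \<delta>) * x\<^sup>2)) at_top"
proof
  assume ev: "eventually (\<lambda>x. m * exp (\<mu> * x\<^sup>2) \<le> K * x ^ n * exp (C * x + (\<mu> - \<delta>) * x\<^sup>2)) at_top"
  have "((\<lambda>x. K * (x ^ n * exp (C * x - \<delta> * x\<^sup>2))) \<longlongrightarrow> K * 0) at_top"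
    by (intro tendsto_mult tendsto_const tendsto_power_mult_exp_neg_square assms)
  hence "eventually (\<lambda>x. K * (x ^ n * exp (C * x - \<delta> * x\<^sup>2)) < m) at_top"
    using assms(1) by (intro order_tendstoD) simp_all
  from eventually_happens[OF eventually_conj[OF ev this]] obtain x where
    le: "m * exp (\<mu> * x\<^sup>2) \<le> K * x ^ n * exp (C * x + (\<mu> - \<delta>) * x\<^sup>2)" and
    less: "K * (x ^ n * exp (C * x - \<delta> * x\<^sup>2)) < m"
    by auto
  have "exp (C * x + (\<mu> - \<delta>) * x\<^sup>2) = exp (\<mu> * x\<^sup>2) * exp (C * x - \<delta> * x\<^sup>2)"
    by (simp add: exp_add[symmetric] algebra_simps)
  with le have "m * exp (\<mu> * x\<^sup>2) \<le> K * (x ^ n * exp (C * x - \<delta> * x\<^sup>2)) * exp (\<mu> * x\<^sup>2)"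
    by (simp add: algebra_simps)
  with less show False by simp
qed

lemma norm_poly_le:
  fixes p :: "'a::{comm_semiring_0,real_normed_div_algebra} poly"
  shows "norm (poly p z) \<le> (\<Sum>i\<le>degree p. norm (coeff p i)) * max 1 (norm z) ^ degree p"
proof -
  have "norm (poly p z) \<le> (\<Sum>i\<le>degree p. norm (coeff p i * z ^ i))"
    unfolding poly_altdef by (rule norm_sum)
  also have "\<dots> \<le> (\<Sum>i\<le>degree p. norm (coeff p i) * max 1 (norm z) ^ degree p)"
  proof (intro sum_mono)
    fix i assume "i \<in> {..degree p}"
    hence "norm z ^ i \<le> max 1 (norm z) ^ degree p"
      by (meson atMost_iff max.cobounded1 max.cobounded2 norm_ge_zero order_trans power_increasing power_mono)
    thus "norm (coeff p i * z ^ i) \<le> norm (coeff p i) * max 1 (norm z) ^ degree p"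
      by (simp add: norm_mult norm_power mult_left_mono)
  qed
  finally show ?thesis by (simp add: sum_distrib_right)
qed

lemma norm_poly_eventually_ge:
  fixes p :: "complex poly"
  assumes "p \<noteq> 0"
  obtains m R where "m > 0" "\<And>z. norm z \<ge> R \<Longrightarrow> norm (poly p z) \<ge> m"
proof (cases "degree p = 0")
  case True
  then obtain c where "p = [:c:]" by (metis degree_eq_zeroE)
  with assms that[of "norm c"] show ?thesis by auto
next
  case False
  obtain a p' where p: "p = pCons a p'" by (cases p)
  with False have "p' \<noteq> 0" by auto
  from poly_infinity[OF this, of 1 a] obtain R where "\<forall>z. R \<le> norm z \<longrightarrow> 1 \<le> norm (poly p z)"
    unfolding p by blast
  with that[of 1 R] show ?thesis by auto
qed

lemma poly_mult_exp_neg_square_tendsto_0: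
  fixes p :: "complex poly"
  assumes "norm u = 1" "\<delta> > 0"
  shows "((\<lambda>x. poly p (u * complex_of_real x) * complex_of_real (exp (- \<delta> * x\<^sup>2))) \<longlongrightarrow> 0) at_top"
proof (rule Lim_null_comparison)
  define K where "K = (\<Sum>i\<le>degree p. norm (coeff p i))"
  have "((\<lambda>x. K * (x ^ degree p * exp (0 * x - \<delta> * x\<^sup>2))) \<longlongrightarrow> K * 0) at_top"
    by (intro tendsto_mult tendsto_const tendsto_power_mult_exp_neg_square assms)
  thus "((\<lambda>x. K * (x ^ degree p * exp (0 * x - \<delta> * x\<^sup>2))) \<longlongrightarrow> 0) at_top" by simp
  show "eventually (\<lambda>x. norm (poly p (u * complex_of_real x) * complex_of_real (exp (- \<delta> * x\<^sup>2)))
          \<le> K * (x ^ degree p * exp (0 * x - \<delta> * x\<^sup>2))) at_top"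
    using eventually_ge_at_top[of 1]
  proof eventually_elim
    case (elim x)
    have "norm (poly p (u * complex_of_real x)) \<le> K * max 1 (norm (u * complex_of_real x)) ^ degree p"
      unfolding K_def by (rule norm_poly_le)
    also have "max 1 (norm (u * complex_of_real x)) = x" using elim assms(1) by (simp add: norm_mult)
    finally show ?case by (simp add: norm_mult mult_right_mono mult.assoc)
  qed
qed

lemma dominant_term_lower_bound:
  fixes p :: "nat \<Rightarrow> complex poly" and \<mu> :: "nat \<Rightarrow> real"
  assumes "finite A" "j \<in> A" "p j \<noteq> 0" "\<And>i. i \<in> A \<Longrightarrow> i \<noteq> j \<Longrightarrow> p i \<noteq> 0 \<Longrightarrow> \<mu> i < \<mu> j"
    and "norm u = 1"
  obtains m where "m > 0" "eventually (\<lambda>x. m * exp (\<mu> j * x\<^sup>2) \<le>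
           norm (\<Sum>i\<in>A. poly (p i) (u * complex_of_real x) * complex_of_real (exp (\<mu> i * x\<^sup>2)))) at_top"
proof -
  obtain m R where m: "m > 0" and R: "\<And>z. norm z \<ge> R \<Longrightarrow> norm (poly (p j) z) \<ge> m"
    using norm_poly_eventually_ge[OF assms(3)] by blast
  define T where "T x = (\<Sum>i\<in>A-{j}. poly (p i) (u * complex_of_real x) * complex_of_real (exp ((\<mu> i - \<mu> j) * x\<^sup>2)))" for x
  have "(T \<longlongrightarrow> 0) at_top" unfolding T_def
  proof (rule tendsto_null_sum)
    fix i assume i: "i \<in> A - {j}"
    show "((\<lambda>x. poly (p i) (u * complex_of_real x) * complex_of_real (exp ((\<mu> i - \<mu> j) * x\<^sup>2))) \<longlongrightarrow> 0) at_top"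
    proof (cases "p i = 0")
      case False
      with i assms(4) have "\<mu> j - \<mu> i > 0" by auto
      from poly_mult_exp_neg_square_tendsto_0[OF assms(5) this, of "p i"] show ?thesis
        by (simp add: algebra_simps)
    qed simp
  qed
  hence "eventually (\<lambda>x. norm (T x) < m / 2) at_top"
    using m by (intro order_tendstoD(2)[OF tendsto_norm_zero]) simp_all
  with eventually_ge_at_top[of R]
  have "eventually (\<lambda>x. m / 2 * exp (\<mu> j * x\<^sup>2) \<le>
           norm (\<Sum>i\<in>A. poly (p i) (u * complex_of_real x) * complex_of_real (exp (\<mu> i * x\<^sup>2)))) at_top"
  proof eventually_elim
    case (elim x)
    have "norm (u * complex_of_real x) \<ge> R" using elim(1) assms(5) by (simp add: norm_mult)
    hence "norm (poly (p j) (u * complex_of_real x)) \<ge> m" by (rule R)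
    with elim(2) have lower: "norm (poly (p j) (u * complex_of_real x) + T x) \<ge> m / 2"
      using norm_triangle_ineq2[of "poly (p j) (u * complex_of_real x)" "- T x"] by simp
    have split: "poly (p i) (u * complex_of_real x) * complex_of_real (exp (\<mu> i * x\<^sup>2)) =
        complex_of_real (exp (\<mu> j * x\<^sup>2)) *
        (poly (p i) (u * complex_of_real x) * complex_of_real (exp ((\<mu> i - \<mu> j) * x\<^sup>2)))" for i
      by (simp add: mult_exp_exp algebra_simps flip: of_real_mult)
    have "(\<Sum>i\<in>A. poly (p i) (u * complex_of_real x) * complex_of_real (exp (\<mu> i * x\<^sup>2)))
        = complex_of_real (exp (\<mu> j * x\<^sup>2)) * (poly (p j) (u * complex_of_real x) + T x)"
      unfolding split T_def sum_distrib_left[symmetric] using assms(1,2)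
      by (simp add: sum.remove[of A j] distrib_left)
    with lower show ?case by (simp add: norm_mult mult.commute mult_left_mono)
  qed
  thus ?thesis using m by (intro that[of "m/2"]) auto
qed

lemma LP_repr_growth_on_axis:
  assumes "LP_repr g \<alpha>" "u = 1 \<or> u = \<i>" "m > 0"
    and "eventually (\<lambda>x. m * exp (\<mu> * x\<^sup>2) \<le> norm (g (u * complex_of_real x))) at_top"
  shows "\<mu> \<le> - \<alpha> * Re (u\<^sup>2)"
proof (rule ccontr)
  assume contra: "\<not> \<mu> \<le> - \<alpha> * Re (u\<^sup>2)"
  define \<delta> where "\<delta> = (\<mu> + \<alpha> * Re (u\<^sup>2)) / 2"
  have \<delta>: "\<delta> > 0" using contra by (simp add: \<delta>_def)
  obtain c n t \<beta> zs fin P where rep: "t \<le> 1" "canonical_prod t zs fin P"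
    "\<And>z. g z = complex_of_real c * z ^ n * P z * exp (- complex_of_real \<alpha> * z ^ 2 + complex_of_real \<beta> * z)"
    using assms(1) unfolding LP_repr_def by blast
  obtain C where C: "\<And>w. Re w = 0 \<or> Im w = 0 \<Longrightarrow> norm (P w) \<le> exp (C * norm w + \<delta> * (norm w)\<^sup>2)"
    using canonical_prod_growth_on_axes[OF rep(2,1) \<delta>] by blast
  have "eventually (\<lambda>x. m * exp (\<mu> * x\<^sup>2) \<le> \<bar>c\<bar> * x ^ n * exp ((C + \<beta> * Re u) * x + (\<mu> - \<delta>) * x\<^sup>2)) at_top"
    using assms(4) eventually_ge_at_top[of 0]
  proof eventually_elim
    case (elim x)
    have axis: "Re (u * complex_of_real x) = 0 \<or> Im (u * complex_of_real x) = 0"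
      and norm_u: "norm u = 1" and norm_ux: "norm (u * complex_of_real x) = x"
      and exponent: "Re (- complex_of_real \<alpha> * (u * complex_of_real x)\<^sup>2 + complex_of_real \<beta> * (u * complex_of_real x))
          = - \<alpha> * Re (u\<^sup>2) * x\<^sup>2 + \<beta> * Re u * x"
      using assms(2) elim(2) by (auto simp: power2_eq_square norm_mult)
    have "norm (g (u * complex_of_real x))
        = \<bar>c\<bar> * x ^ n * norm (P (u * complex_of_real x)) * exp (- \<alpha> * Re (u\<^sup>2) * x\<^sup>2 + \<beta> * Re u * x)"
      by (simp only: rep(3) norm_mult norm_power norm_exp_eq_Re exponent norm_of_real norm_u
          abs_of_nonneg[OF elim(2)] mult_1_left)
    also have "\<dots> \<le> \<bar>c\<bar> * x ^ n * exp (C * x + \<delta> * x\<^sup>2) * exp (- \<alpha> * Re (u\<^sup>2) * x\<^sup>2 + \<beta> * Re u * x)"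
      using C[OF axis] elim(2) by (intro mult_right_mono mult_left_mono) (auto simp: norm_ux)
    also have "\<dots> = \<bar>c\<bar> * x ^ n * exp ((C + \<beta> * Re u) * x + (\<mu> - \<delta>) * x\<^sup>2)"
      by (simp add: mult.assoc exp_add[symmetric] \<delta>_def algebra_simps)
    finally show ?case using elim(1) by simp
  qed
  with not_eventually_exp_square_le[OF assms(3) \<delta>] show False by blast
qed

lemma T1_gaussian_on_axis:
  assumes "u = 1 \<or> u = \<i>"
  shows "T1 q k a (\<lambda>z. exp (- z\<^sup>2)) (u * complex_of_real x) =
    (\<Sum>i\<in>{..k}. poly (a i) (u * complex_of_real x) * complex_of_real (exp ((- Re (u\<^sup>2) * (q ^ i)\<^sup>2) * x\<^sup>2)))"
  unfolding T1_def
proof (rule sum.cong)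
  fix i
  have "- (complex_of_real (q ^ i) * (u * complex_of_real x))\<^sup>2 = complex_of_real ((- Re (u\<^sup>2) * (q ^ i)\<^sup>2) * x\<^sup>2)"
    using assms by (auto simp: power_mult_distrib)
  thus "poly (a i) (u * complex_of_real x) * exp (- (complex_of_real (q ^ i) * (u * complex_of_real x))\<^sup>2) =
      poly (a i) (u * complex_of_real x) * complex_of_real (exp ((- Re (u\<^sup>2) * (q ^ i)\<^sup>2) * x\<^sup>2))"
    by (simp only: exp_of_real)
qed simp

lemma T1_gaussian_dominant_exponent_le:
  assumes "LP_repr (T1 q k a (\<lambda>z. exp (- z\<^sup>2))) \<alpha>" "u = 1 \<or> u = \<i>" "j \<le> k" "a j \<noteq> 0"
    and "\<And>i. i \<le> k \<Longrightarrow> i \<noteq> j \<Longrightarrow> a i \<noteq> 0 \<Longrightarrow> - Re (u\<^sup>2) * (q ^ i)\<^sup>2 < - Re (u\<^sup>2) * (q ^ j)\<^sup>2"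
  shows "- Re (u\<^sup>2) * (q ^ j)\<^sup>2 \<le> - \<alpha> * Re (u\<^sup>2)"
proof -
  have "norm u = 1" using assms(2) by auto
  obtain m where "m > 0" and "eventually (\<lambda>x. m * exp ((- Re (u\<^sup>2) * (q ^ j)\<^sup>2) * x\<^sup>2) \<le>
      norm (\<Sum>i\<in>{..k}. poly (a i) (u * complex_of_real x) *
        complex_of_real (exp ((- Re (u\<^sup>2) * (q ^ i)\<^sup>2) * x\<^sup>2)))) at_top"
    by (rule dominant_term_lower_bound[of "{..k}" j a "\<lambda>i. - Re (u\<^sup>2) * (q ^ i)\<^sup>2" u])
       (use assms(3-5) \<open>norm u = 1\<close> in auto)
  thus ?thesis
    by (intro LP_repr_growth_on_axis[OF assms(1,2)]) (simp_all only: T1_gaussian_on_axis[OF assms(2)])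
qed

lemma inj_power_square:
  fixes q :: real
  assumes "q \<noteq> 0" "\<bar>q\<bar> \<noteq> 1"
  shows "inj (\<lambda>i::nat. (q ^ i)\<^sup>2)"
proof
  fix i j :: nat
  assume "(q ^ i)\<^sup>2 = (q ^ j)\<^sup>2"
  hence "(q\<^sup>2) ^ i = (q\<^sup>2) ^ j" by (simp flip: power_mult power_mult_distrib add: mult.commute)
  moreover have "q\<^sup>2 > 0" "q\<^sup>2 \<noteq> 1" using assms by (auto simp: power2_eq_1_iff abs_if split: if_splits)
  ultimately show "i = j" by (simp add: power_inject_exp')
qed

lemma finite_inj_on_strict_argmax:
  fixes f :: "'a \<Rightarrow> 'b::linorder"
  assumes "finite S" "S \<noteq> {}" "inj_on f S"
  obtains j where "j \<in> S" "\<And>i. i \<in> S \<Longrightarrow> i \<noteq> j \<Longrightarrow> f i < f j"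
proof -
  have "Max (f ` S) \<in> f ` S" by (rule Max_in) (use assms(1,2) in auto)
  then obtain j where j: "j \<in> S" "f j = Max (f ` S)" by (metis imageE)
  have "f i < f j" if "i \<in> S" "i \<noteq> j" for i
  proof -
    have "f i \<le> f j" unfolding j(2) by (rule Max_ge) (use assms(1) that in auto)
    moreover have "f i \<noteq> f j" using inj_onD[OF assms(3), of i j] that j(1) by blast
    ultimately show ?thesis by simp
  qed
  with j(1) show ?thesis by (rule that)
qed

lemma coeff_in_Reals_if_poly_of_real_in_Reals:
  fixes p :: "complex poly"
  assumes "\<And>x. poly p (complex_of_real x) \<in> \<real>"
  shows "coeff p i \<in> \<real>"
proof -
  define p' where "p' = map_poly cnj p"
  have "poly (p - p') (complex_of_real x) = 0" for x
    using assms[of x] by (simp add: p'_def Reals_cnj_iff)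
  hence "range (\<lambda>n::nat. complex_of_real (real n)) \<subseteq> {z. poly (p - p') z = 0}"
    by (auto simp del: of_real_of_nat_eq)
  moreover have "infinite (range (\<lambda>n::nat. complex_of_real (real n)))"
    by (rule range_inj_infinite) (simp add: inj_on_def)
  ultimately have "p = p'" using poly_roots_finite[of "p - p'"] finite_subset by auto
  hence "coeff p i = cnj (coeff p i)" by (metis p'_def coeff_map_poly complex_cnj_zero)
  thus ?thesis by (simp add: Reals_cnj_iff)
qed

lemma HP_if_LP_repr_mult_gaussian:
  assumes "LP_repr (\<lambda>z. poly p z * exp (- (complex_of_real c * z)\<^sup>2)) \<alpha>" "p \<noteq> 0"
  shows "p \<in> HP"
  unfolding HP_def
proof (intro CollectI conjI allI impI)
  fix i
  show "coeff p i \<in> \<real>"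
  proof (rule coeff_in_Reals_if_poly_of_real_in_Reals)
    fix x
    define e where "e = exp (- (c * x)\<^sup>2)"
    have "exp (- (complex_of_real c * complex_of_real x)\<^sup>2) = complex_of_real e"
      by (simp add: e_def flip: exp_of_real)
    hence "poly p (complex_of_real x) * complex_of_real e \<in> \<real>"
      using LP_repr_of_real_in_Reals[OF assms(1), of x] by simp
    hence "poly p (complex_of_real x) * complex_of_real e / complex_of_real e \<in> \<real>"
      by (intro Reals_divide) auto
    thus "poly p (complex_of_real x) \<in> \<real>" by (simp add: e_def)
  qed
next
  fix z
  assume "poly p z = 0"
  thus "z \<in> \<real>" using LP_repr_nonzero[OF assms(1), of z] by auto
qed (use assms(2) in simp)

lemma LP_repr_T1_gaussian_imp_single_HP_coeff:
  assumes "q \<noteq> 0" "\<bar>q\<bar> \<noteq> 1" "LP_repr (T1 q k a (\<lambda>z. exp (- z\<^sup>2))) \<alpha>"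
  shows "\<exists>j\<le>k. (\<forall>i\<le>k. i \<noteq> j \<longrightarrow> a i = 0) \<and> a j \<in> HP"
proof -
  define S where "S = {i. i \<le> k \<and> a i \<noteq> 0}"
  have "finite S" by (simp add: S_def)
  have "S \<noteq> {}"
  proof
    assume "S = {}"
    hence "T1 q k a (\<lambda>z. exp (- z\<^sup>2)) \<i> = 0" by (auto simp: T1_def S_def intro!: sum.neutral)
    with LP_repr_nonzero[OF assms(3)] show False by (simp add: complex_is_Real_iff)
  qed
  have inj: "inj_on (\<lambda>i. c * (q ^ i)\<^sup>2) S" if "c \<noteq> 0" for c :: real
    using inj_power_square[OF assms(1,2)] that by (auto simp: inj_on_def inj_def)
  obtain j1 where j1: "j1 \<in> S" "\<And>i. i \<in> S \<Longrightarrow> i \<noteq> j1 \<Longrightarrow> 1 * (q ^ i)\<^sup>2 < 1 * (q ^ j1)\<^sup>2"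
    using finite_inj_on_strict_argmax[OF \<open>finite S\<close> \<open>S \<noteq> {}\<close> inj] by (metis one_neq_zero)
  obtain j0 where j0: "j0 \<in> S" "\<And>i. i \<in> S \<Longrightarrow> i \<noteq> j0 \<Longrightarrow> - 1 * (q ^ i)\<^sup>2 < - 1 * (q ^ j0)\<^sup>2"
    using finite_inj_on_strict_argmax[OF \<open>finite S\<close> \<open>S \<noteq> {}\<close> inj] by (metis neg_one_neq_zero)
  have "(q ^ j1)\<^sup>2 \<le> \<alpha>"
    using T1_gaussian_dominant_exponent_le[OF assms(3), of \<i> j1] j1 by (auto simp: S_def)
  moreover have "\<alpha> \<le> (q ^ j0)\<^sup>2"
    using T1_gaussian_dominant_exponent_le[OF assms(3), of 1 j0] j0 by (auto simp: S_def)
  ultimately have "S = {j1}"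
    using j0 j1 by fastforce
  hence j: "j1 \<le> k" "a j1 \<noteq> 0" "\<forall>i\<le>k. i \<noteq> j1 \<longrightarrow> a i = 0" by (auto simp: S_def)
  have "a j1 \<in> HP"
    using HP_if_LP_repr_mult_gaussian[of "a j1" "q ^ j1"] assms(3) j
    by (simp add: T1_single_coeff[OF j(1,3)])
  with j show ?thesis by blast
qed

lemma gaussian_in_LP2: "(\<lambda>z. exp (- z\<^sup>2)) \<in> LP2"
proof -
  have "canonical_prod 0 (\<lambda>_. 1) (Some 0) (\<lambda>_. 1)" by (simp add: canonical_prod_def)
  hence "LP_repr (\<lambda>z. exp (- z\<^sup>2)) 1" unfolding LP_repr_def
    by (intro exI[of _ "1::real"] exI[of _ "0::nat"] exI[of _ "0::nat"] exI[of _ "0::real"]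
        exI[of _ "\<lambda>_. 1::real"] exI[of _ "Some (0::nat)"] exI[of _ "\<lambda>_. 1::complex"]) simp
  thus ?thesis unfolding LP2_def by (intro CollectI exI[of _ "1::real"]) simp
qed

theorem corollary1p3:
  fixes q :: real and k :: nat and a :: "nat \<Rightarrow> complex poly"
  assumes "q \<noteq> 0" and "\<bar>q\<bar> \<noteq> 1"
  shows "(\<forall>f\<in>LP2. T1 q k a f \<in> LP2) \<longleftrightarrow>
         (\<exists>j\<le>k. (\<forall>i\<le>k. i \<noteq> j \<longrightarrow> a i = 0) \<and> a j \<in> HP)"
proof
  assume "\<forall>f\<in>LP2. T1 q k a f \<in> LP2"
  hence "T1 q k a (\<lambda>z. exp (- z\<^sup>2)) \<in> LP2" using gaussian_in_LP2 by blast
  then obtain \<alpha> where "LP_repr (T1 q k a (\<lambda>z. exp (- z\<^sup>2))) \<alpha>" by (auto simp: LP2_def)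
  thus "\<exists>j\<le>k. (\<forall>i\<le>k. i \<noteq> j \<longrightarrow> a i = 0) \<and> a j \<in> HP"
    by (rule LP_repr_T1_gaussian_imp_single_HP_coeff[OF assms])
next
  assume "\<exists>j\<le>k. (\<forall>i\<le>k. i \<noteq> j \<longrightarrow> a i = 0) \<and> a j \<in> HP"
  thus "\<forall>f\<in>LP2. T1 q k a f \<in> LP2"
    using T1_single_HP_coeff_preserves_LP2[OF assms(1)] by blast
qed

end
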